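(* Let $g>0$, $0<\rho_0<\rho_+$, $f,\hat f\in\mathbb{R}$, $k>0$, $a>0$, $r_0>0$, and let $c\neq 0$ satisfy $k^2c^2>f^2$. Let $m>0$ be defined by $$m^2=\frac{k^4c^2}{k^2c^2-f^2},$$ and set $$b=\frac{ma}{k},\qquad d=-\frac{fma}{k^2c}$$ (so that $ma-kb=0$, $kcd+bf=0$, $mkc^2b+mcdf=k^2c^2a$ and $b^2=a^2+d^2$). Let $s^*>0$ satisfy $m^2a^2e^{-2ms^*}<1$, and let $s^*\le s_0<s_+$. For labels $(q,r,s)\in\mathbb{R}\times[-r_0,r_0]\times[s_0,s_+]$ and time $t$, put $\theta=k(q-ct)$ and define particle positions $$x=q-be^{-ms}\sin\theta,\qquad y=r-de^{-ms}\cos\theta,\qquad z=s-ae^{-ms}\cos\theta .$$ Then: (i) the Jacobian determinant of $(q,r,s)\mapsto(x,y,z)$ equals $1-m^2a^2e^{-2ms}$, which is independent of $t$ and nonzero, so the flow is volume preserving (incompressible); (ii) the velocity field $(u,v,w)=\frac{D}{Dt}(x,y,z)=(kcbe^{-ms}\cos\theta,\,-kcde^{-ms}\sin\theta,\,-kcae^{-ms}\sin\theta)$ together with the pressure $$P=\tilde P_0-\rho_0\Big[-\tfrac12k^2c^2b^2e^{-2ms}+\tfrac12\hat f kcab\,e^{-2ms}-\tfrac12 fkcbd\,e^{-2ms}+(ca\hat f-cdf-kc^2b-ag)e^{-ms}\cos\theta+gs\Big]$$ (for any constant $\tilde P_0$) satisfies the $f$-plane Euler equations $$\tfrac{Du}{Dt}+\hat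 f w-fv=-\tfrac{1}{\rho_0}P_x,\quad \tfrac{Dv}{Dt}+fu=-\tfrac{1}{\rho_0}P_y,\quad \tfrac{Dw}{Dt}-\hat f u=-\tfrac{1}{\rho_0}P_z-g$$ in the region $\{s_0\le s\le s_+\}$; (iii) if moreover the pressure-continuity condition $$\rho_+ga=\rho_0\big(kc^2b+cdf-ca\hat f+ag\big)$$ holds, then for every constant $P_0$ the constant $\tilde P_0$ can be chosen so that $P=P_0-\rho_+gz$ on the surface $s=s_0$ (the thermocline), which is a material surface (so the kinematic condition holds there); and in this case $c$ satisfies the dispersion relation $$c^2(c^2k^2-f^2)=(c\hat f+\tilde g)^2,\qquad \tilde g=\frac{g(\rho_+-\rho_0)}{\rho_0}.$$
   Context: Setting: a fluid layer of constant density $\rho_0$ (lying above a motionless abyssal layer of constant density $\rho_+>\rho_0$, in which the pressure is hydrostatic, $P=P_0-\rho_+gz$) is described in a rotating frame with $x,y,z$ pointing east (longitude), north (latitude) and locally vertical. In the $f$-plane approximation the Coriolis parameters $f=2\Omega\sin\phi$ and $\hat f=2\Omega\cos\phi$ ($\Omega$ Earth's rotation rate, $\phi$ a fixed latitude) are treated as constants, and $g$ is gravitational acceleration. The flow is described in Lagrangian form: $(q,r,s)$ are particle labels, $D/Dt$ is the material (Lagrangian time) derivative at fixed labels, and $P_x,P_y,P_z$ are Eulerian partial derivatives of the pressure. The surface $s=s_0$ is the thermocline $z=\eta(x,y,t)$ separating the moving layer from the still layer below; the dynamic condition there is $P=P_0-\rho_+gz$ and the kinematic condition is $w=\eta_t+u\eta_x+v\eta_y$.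 *)

theory Defs
  imports "HOL-Analysis.Analysis"
begin

definition phase :: "real \<Rightarrow> real \<Rightarrow> real \<Rightarrow> real \<Rightarrow> real" where
  "phase k c q t = k * (q - c * t)"

definition xpos :: "real \<Rightarrow> real \<Rightarrow> real \<Rightarrow> real \<Rightarrow> real \<Rightarrow> real \<Rightarrow> real \<Rightarrow> real \<Rightarrow> real" where
  "xpos b m k c q r s t = q - b * exp (- m * s) * sin (phase k c q t)"

definition ypos :: "real \<Rightarrow> real \<Rightarrow> real \<Rightarrow> real \<Rightarrow> real \<Rightarrow> real \<Rightarrow> real \<Rightarrow> real \<Rightarrow> real" where
  "ypos d m k c q r s t = r - d * exp (- m * s) * cos (phase k c q t)"

definition zpos :: "real \<Rightarrow> real \<Rightarrow> real \<Rightarrow> real \<Rightarrow> real \<Rightarrow> real \<Rightarrow> real \<Rightarrow> real \<Rightarrow> real" where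
  "zpos a m k c q r s t = s - a * exp (- m * s) * cos (phase k c q t)"

definition uvel :: "real \<Rightarrow> real \<Rightarrow> real \<Rightarrow> real \<Rightarrow> real \<Rightarrow> real \<Rightarrow> real \<Rightarrow> real \<Rightarrow> real" where
  "uvel b m k c q r s t = k * c * b * exp (- m * s) * cos (phase k c q t)"

definition vvel :: "real \<Rightarrow> real \<Rightarrow> real \<Rightarrow> real \<Rightarrow> real \<Rightarrow> real \<Rightarrow> real \<Rightarrow> real \<Rightarrow> real" where
  "vvel d m k c q r s t = - k * c * d * exp (- m * s) * sin (phase k c q t)"

definition wvel :: "real \<Rightarrow> real \<Rightarrow> real \<Rightarrow> real \<Rightarrow> real \<Rightarrow> real \<Rightarrow> real \<Rightarrow> real \<Rightarrow> real" where
  "wvel a m k c q r s t = - k * c * a * exp (- m * s) * sin (phase k c q t)"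

text \<open>The pressure, expressed in Lagrangian labels; \<open>P0t\<close> is the constant \<open>\<tilde>P_0\<close>.\<close>

definition pres ::
  "real \<Rightarrow> real \<Rightarrow> real \<Rightarrow> real \<Rightarrow> real \<Rightarrow> real \<Rightarrow> real \<Rightarrow> real \<Rightarrow> real \<Rightarrow> real \<Rightarrow> real \<Rightarrow> real
   \<Rightarrow> real \<Rightarrow> real \<Rightarrow> real \<Rightarrow> real" where
  "pres P0t rho0 g f fh k c a b d m q r s t =
     P0t - rho0 * ( - (1/2) * k^2 * c^2 * b^2 * exp (- 2 * m * s)
                    + (1/2) * fh * k * c * a * b * exp (- 2 * m * s)
                    - (1/2) * f * k * c * b * d * exp (- 2 * m * s)
                    + (c * a * fh - c * d * f - k * c^2 * b - a * g) * exp (- m * s) * cos (phase k c q t)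
                    + g * s)"

definition det3 :: "real \<Rightarrow> real \<Rightarrow> real \<Rightarrow> real \<Rightarrow> real \<Rightarrow> real \<Rightarrow> real \<Rightarrow> real \<Rightarrow> real \<Rightarrow> real" where
  "det3 a11 a12 a13 a21 a22 a23 a31 a32 a33 =
     a11 * (a22 * a33 - a23 * a32) - a12 * (a21 * a33 - a23 * a31) + a13 * (a21 * a32 - a22 * a31)"

end

theory Submission
  imports Defs
begin

text \<open>Since \<open>k b = m a\<close> and \<open>sin\<^sup>2 + cos\<^sup>2 = 1\<close>, the Jacobian of the trochoidal label map is
  \<open>1 - m\<^sup>2 a\<^sup>2 exp (-2 m s)\<close>, which is positive for \<open>s \<ge> sstar\<close>. Instead of inverting the label map
  to compute the Eulerian pressure gradient, take as candidate the gradient that the Euler equations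
  demand and check the chain rule \<open>\<nabla>\<^sub>q\<^sub>r\<^sub>s P = J\<^sup>T \<nabla>P\<close>: given the parameter relations this is a
  trigonometric identity, and invertibility of \<open>J\<close> makes the candidate the only solution.
  On the thermocline the pressure-continuity condition matches the oscillating terms of \<open>P\<close>;
  combined with \<open>m c (k c b + d f) = k\<^sup>2 c\<^sup>2 a\<close> it gives \<open>c fh + g (rhop - rho0) / rho0 = k\<^sup>2 c\<^sup>2 / m\<close>,
  and squaring yields the dispersion relation.\<close>

definition jacobian3 ::
  "(real \<Rightarrow> real \<Rightarrow> real \<Rightarrow> real) \<Rightarrow> (real \<Rightarrow> real \<Rightarrow> real \<Rightarrow> real) \<Rightarrow> (real \<Rightarrow> real \<Rightarrow> real \<Rightarrow> real)
   \<Rightarrow> real \<Rightarrow> real \<Rightarrow> real \<Rightarrow> real" where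
  "jacobian3 X Y Z q r s =
     det3 (deriv (\<lambda>q'. X q' r s) q) (deriv (\<lambda>r'. X q r' s) r) (deriv (\<lambda>s'. X q r s') s)
          (deriv (\<lambda>q'. Y q' r s) q) (deriv (\<lambda>r'. Y q r' s) r) (deriv (\<lambda>s'. Y q r s') s)
          (deriv (\<lambda>q'. Z q' r s) q) (deriv (\<lambda>r'. Z q r' s) r) (deriv (\<lambda>s'. Z q r s') s)"

text \<open>\<open>(Px, Py, Pz)\<close> is the Eulerian gradient of the Lagrangian field \<open>P\<close> under the label map
  \<open>(X, Y, Z)\<close>, characterised through the chain rule.\<close>

definition eulerian_gradient ::
  "(real \<Rightarrow> real \<Rightarrow> real \<Rightarrow> real) \<Rightarrow> (real \<Rightarrow> real \<Rightarrow> real \<Rightarrow> real) \<Rightarrow> (real \<Rightarrow> real \<Rightarrow> real \<Rightarrow> real)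
   \<Rightarrow> (real \<Rightarrow> real \<Rightarrow> real \<Rightarrow> real) \<Rightarrow> real \<Rightarrow> real \<Rightarrow> real \<Rightarrow> real \<Rightarrow> real \<Rightarrow> real \<Rightarrow> bool" where
  "eulerian_gradient P X Y Z q r s Px Py Pz \<longleftrightarrow>
     deriv (\<lambda>q'. P q' r s) q
       = deriv (\<lambda>q'. X q' r s) q * Px + deriv (\<lambda>q'. Y q' r s) q * Py + deriv (\<lambda>q'. Z q' r s) q * Pz
   \<and> deriv (\<lambda>r'. P q r' s) r
       = deriv (\<lambda>r'. X q r' s) r * Px + deriv (\<lambda>r'. Y q r' s) r * Py + deriv (\<lambda>r'. Z q r' s) r * Pz
   \<and> deriv (\<lambda>s'. P q r s') s
       = deriv (\<lambda>s'. X q r s') s * Px + deriv (\<lambda>s'. Y q r s') s * Py + deriv (\<lambda>s'. Z q r s') s * Pz"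

lemma det3_transpose_kernel:
  assumes "det3 a11 a12 a13 a21 a22 a23 a31 a32 a33 \<noteq> 0"
    and "a11 * v1 + a21 * v2 + a31 * v3 = 0"
    and "a12 * v1 + a22 * v2 + a32 * v3 = 0"
    and "a13 * v1 + a23 * v2 + a33 * v3 = 0"
  shows "v1 = 0 \<and> v2 = 0 \<and> v3 = 0"
proof -
  have "det3 a11 a12 a13 a21 a22 a23 a31 a32 a33 * v1 = 0"
    and "det3 a11 a12 a13 a21 a22 a23 a31 a32 a33 * v2 = 0"
    and "det3 a11 a12 a13 a21 a22 a23 a31 a32 a33 * v3 = 0"
    using assms(2-4) unfolding det3_def by algebra+
  then show ?thesis using assms(1) by simp
qed

lemma eulerian_gradient_unique:
  assumes "jacobian3 X Y Z q r s \<noteq> 0"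
    and "eulerian_gradient P X Y Z q r s Px Py Pz"
    and "eulerian_gradient P X Y Z q r s Px' Py' Pz'"
  shows "Px = Px' \<and> Py = Py' \<and> Pz = Pz'"
proof -
  have "Px - Px' = 0 \<and> Py - Py' = 0 \<and> Pz - Pz' = 0"
    using assms(2,3) by (intro det3_transpose_kernel[OF assms(1)[unfolded jacobian3_def]])
      (auto simp: eulerian_gradient_def algebra_simps)
  then show ?thesis by simp
qed

lemma deriv_xpos_q: "deriv (\<lambda>q'. xpos b m k c q' r s t) q = 1 - k * b * exp (- m * s) * cos (phase k c q t)"
  by (rule DERIV_imp_deriv) (unfold xpos_def phase_def, (rule derivative_eq_intros refl | simp)+)
lemma deriv_xpos_r: "deriv (\<lambda>r'. xpos b m k c q r' s t) r = 0"
  unfolding xpos_def by simp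
lemma deriv_xpos_s: "deriv (\<lambda>s'. xpos b m k c q r s' t) s = m * b * exp (- m * s) * sin (phase k c q t)"
  by (rule DERIV_imp_deriv) (unfold xpos_def phase_def, (rule derivative_eq_intros refl | simp)+)
lemma deriv_xpos_t: "deriv (\<lambda>t'. xpos b m k c q r s t') t = uvel b m k c q r s t"
  unfolding uvel_def
  by (rule DERIV_imp_deriv) (unfold xpos_def phase_def, (rule derivative_eq_intros refl | simp)+)

lemma deriv_ypos_q: "deriv (\<lambda>q'. ypos d m k c q' r s t) q = k * d * exp (- m * s) * sin (phase k c q t)"
  by (rule DERIV_imp_deriv) (unfold ypos_def phase_def, (rule derivative_eq_intros refl | simp)+)
lemma deriv_ypos_r: "deriv (\<lambda>r'. ypos d m k c q r' s t) r = 1"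
  by (rule DERIV_imp_deriv) (unfold ypos_def, (rule derivative_eq_intros refl | simp)+)
lemma deriv_ypos_s: "deriv (\<lambda>s'. ypos d m k c q r s' t) s = m * d * exp (- m * s) * cos (phase k c q t)"
  by (rule DERIV_imp_deriv) (unfold ypos_def, (rule derivative_eq_intros refl | simp)+)
lemma deriv_ypos_t: "deriv (\<lambda>t'. ypos d m k c q r s t') t = vvel d m k c q r s t"
  unfolding vvel_def
  by (rule DERIV_imp_deriv) (unfold ypos_def phase_def, (rule derivative_eq_intros refl | simp)+)

lemma deriv_zpos_q: "deriv (\<lambda>q'. zpos a m k c q' r s t) q = k * a * exp (- m * s) * sin (phase k c q t)"
  by (rule DERIV_imp_deriv) (unfold zpos_def phase_def, (rule derivative_eq_intros refl | simp)+)
lemma deriv_zpos_r: "deriv (\<lambda>r'. zpos a m k c q r' s t) r = 0"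
  unfolding zpos_def by simp
lemma deriv_zpos_s: "deriv (\<lambda>s'. zpos a m k c q r s' t) s = 1 + m * a * exp (- m * s) * cos (phase k c q t)"
  by (rule DERIV_imp_deriv) (unfold zpos_def, (rule derivative_eq_intros refl | simp)+)
lemma deriv_zpos_t: "deriv (\<lambda>t'. zpos a m k c q r s t') t = wvel a m k c q r s t"
  unfolding wvel_def
  by (rule DERIV_imp_deriv) (unfold zpos_def phase_def, (rule derivative_eq_intros refl | simp)+)

lemma deriv_uvel_t: "deriv (\<lambda>t'. uvel b m k c q r s t') t = k^2 * c^2 * b * exp (- m * s) * sin (phase k c q t)"
  by (rule DERIV_imp_deriv)
    (unfold uvel_def phase_def, (rule derivative_eq_intros refl | simp add: power2_eq_square)+)
lemma deriv_vvel_t: "deriv (\<lambda>t'. vvel d m k c q r s t') t = k^2 * c^2 * d * exp (- m * s) * cos (phase k c q t)"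
  by (rule DERIV_imp_deriv)
    (unfold vvel_def phase_def, (rule derivative_eq_intros refl | simp add: power2_eq_square)+)
lemma deriv_wvel_t: "deriv (\<lambda>t'. wvel a m k c q r s t') t = k^2 * c^2 * a * exp (- m * s) * cos (phase k c q t)"
  by (rule DERIV_imp_deriv)
    (unfold wvel_def phase_def, (rule derivative_eq_intros refl | simp add: power2_eq_square)+)

lemma deriv_pres_q: "deriv (\<lambda>q'. pres P0t rho0 g f fh k c a b d m q' r s t) q
   = rho0 * k * (c * a * fh - c * d * f - k * c^2 * b - a * g) * exp (- m * s) * sin (phase k c q t)"
  by (rule DERIV_imp_deriv) (unfold pres_def phase_def, (rule derivative_eq_intros refl | simp)+)
lemma deriv_pres_r: "deriv (\<lambda>r'. pres P0t rho0 g f fh k c a b d m q r' s t) r = 0"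
  unfolding pres_def by simp
lemma deriv_pres_s: "deriv (\<lambda>s'. pres P0t rho0 g f fh k c a b d m q r s' t) s
   = - rho0 * (m * k * c * b * (k * c * b - fh * a + f * d) * exp (- 2 * m * s)
       - m * (c * a * fh - c * d * f - k * c^2 * b - a * g) * exp (- m * s) * cos (phase k c q t) + g)"
  by (rule DERIV_imp_deriv)
    (unfold pres_def, (rule derivative_eq_intros refl | simp add: algebra_simps power2_eq_square)+)

lemma gerstner_parameter_relations:
  fixes k c f m a b d :: real
  assumes "k \<noteq> 0" and "c \<noteq> 0" and "k^2 * c^2 \<noteq> f^2"
    and "m^2 = k^4 * c^2 / (k^2 * c^2 - f^2)"
    and "b = m * a / k" and "d = - (f * m * a / (k^2 * c))"
  shows "k * b = m * a" and "k * c * d + b * f = 0" and "b^2 = a^2 + d^2"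
    and "m * k * c^2 * b + m * c * d * f = k^2 * c^2 * a"
proof -
  have m2: "m^2 * (k^2 * c^2 - f^2) = k^4 * c^2" using assms(3,4) by (simp add: field_simps)
  show "k * b = m * a" "k * c * d + b * f = 0"
    unfolding assms(5,6) using assms(1,2) by (simp_all add: field_simps power2_eq_square)
  have "b^2 - a^2 - d^2 = a^2 * (m^2 * (k^2 * c^2 - f^2) - k^4 * c^2) / (k^4 * c^2)"
    unfolding assms(5,6) using assms(1,2) by (simp add: field_simps power2_eq_square power4_eq_xxxx)
  then show "b^2 = a^2 + d^2" unfolding m2 by simp
  have "m * k * c^2 * b + m * c * d * f - k^2 * c^2 * a
      = a * (m^2 * (k^2 * c^2 - f^2) - k^4 * c^2) / k^2"
    unfolding assms(5,6) using assms(1,2) by (simp add: field_simps power2_eq_square power4_eq_xxxx)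
  then show "m * k * c^2 * b + m * c * d * f = k^2 * c^2 * a" unfolding m2 by simp
qed

lemma exp_neg_double_eq_power2: "exp (- 2 * m * s) = exp (- m * s :: real)^2"
  by (simp add: power2_eq_square exp_add[symmetric])

lemma gerstner_jacobian:
  assumes "k * b = m * a"
  shows "jacobian3 (\<lambda>q r s. xpos b m k c q r s t) (\<lambda>q r s. ypos d m k c q r s t)
      (\<lambda>q r s. zpos a m k c q r s t) q r s = 1 - m^2 * a^2 * exp (- 2 * m * s)"
  unfolding jacobian3_def det3_def deriv_xpos_q deriv_xpos_r deriv_xpos_s deriv_ypos_q deriv_ypos_r
    deriv_ypos_s deriv_zpos_q deriv_zpos_r deriv_zpos_s exp_neg_double_eq_power2
  using assms sin_cos_squared_add[of "phase k c q t"] by algebra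

lemma gerstner_jacobian_pos:
  fixes m a s sstar :: real
  assumes "0 \<le> m" and "sstar \<le> s" and "m^2 * a^2 * exp (- 2 * m * sstar) < 1"
  shows "0 < 1 - m^2 * a^2 * exp (- 2 * m * s)"
proof -
  have "m^2 * a^2 * exp (- 2 * m * s) \<le> m^2 * a^2 * exp (- 2 * m * sstar)"
    using assms(1,2) by (intro mult_left_mono) (auto intro: mult_left_mono)
  then show ?thesis using assms(3) by linarith
qed

lemma eulerian_gradient_pres:
  assumes "k * b = m * a" and "k * c * d + b * f = 0" and "b^2 = a^2 + d^2"
    and "m * k * c^2 * b + m * c * d * f = k^2 * c^2 * a"
  shows "eulerian_gradient (\<lambda>q r s. pres P0t rho0 g f fh k c a b d m q r s t)
     (\<lambda>q r s. xpos b m k c q r s t) (\<lambda>q r s. ypos d m k c q r s t) (\<lambda>q r s. zpos a m k c q r s t) q r s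
     (- rho0 * (deriv (\<lambda>t'. uvel b m k c q r s t') t + fh * wvel a m k c q r s t - f * vvel d m k c q r s t))
     (- rho0 * (deriv (\<lambda>t'. vvel d m k c q r s t') t + f * uvel b m k c q r s t))
     (- rho0 * (deriv (\<lambda>t'. wvel a m k c q r s t') t - fh * uvel b m k c q r s t + g))"
  unfolding eulerian_gradient_def deriv_xpos_q deriv_xpos_r deriv_xpos_s deriv_ypos_q deriv_ypos_r
    deriv_ypos_s deriv_zpos_q deriv_zpos_r deriv_zpos_s deriv_pres_q deriv_pres_r deriv_pres_s
    deriv_uvel_t deriv_vvel_t deriv_wvel_t
  unfolding uvel_def vvel_def wvel_def exp_neg_double_eq_power2
  using assms sin_cos_squared_add[of "phase k c q t"] by (intro conjI; algebra)

lemma gerstner_euler_equations: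
  assumes "k * b = m * a" and "k * c * d + b * f = 0" and "b^2 = a^2 + d^2"
    and "m * k * c^2 * b + m * c * d * f = k^2 * c^2 * a"
    and "rho0 \<noteq> 0" and "1 - m^2 * a^2 * exp (- 2 * m * s) \<noteq> 0"
  shows "(\<exists>Px Py Pz. eulerian_gradient (\<lambda>q r s. pres P0t rho0 g f fh k c a b d m q r s t)
            (\<lambda>q r s. xpos b m k c q r s t) (\<lambda>q r s. ypos d m k c q r s t) (\<lambda>q r s. zpos a m k c q r s t)
            q r s Px Py Pz)
       \<and> (\<forall>Px Py Pz. eulerian_gradient (\<lambda>q r s. pres P0t rho0 g f fh k c a b d m q r s t)
            (\<lambda>q r s. xpos b m k c q r s t) (\<lambda>q r s. ypos d m k c q r s t) (\<lambda>q r s. zpos a m k c q r s t)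
            q r s Px Py Pz \<longrightarrow>
              deriv (\<lambda>t'. uvel b m k c q r s t') t + fh * wvel a m k c q r s t - f * vvel d m k c q r s t
                = - (1 / rho0) * Px
            \<and> deriv (\<lambda>t'. vvel d m k c q r s t') t + f * uvel b m k c q r s t = - (1 / rho0) * Py
            \<and> deriv (\<lambda>t'. wvel a m k c q r s t') t - fh * uvel b m k c q r s t = - (1 / rho0) * Pz - g)"
proof (intro conjI allI impI)
  note grad = eulerian_gradient_pres[OF assms(1-4), of P0t rho0 g fh t q r s]
  then show "\<exists>Px Py Pz. eulerian_gradient (\<lambda>q r s. pres P0t rho0 g f fh k c a b d m q r s t)
            (\<lambda>q r s. xpos b m k c q r s t) (\<lambda>q r s. ypos d m k c q r s t) (\<lambda>q r s. zpos a m k c q r s t)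
            q r s Px Py Pz"
    by blast
  fix Px Py Pz
  assume "eulerian_gradient (\<lambda>q r s. pres P0t rho0 g f fh k c a b d m q r s t)
            (\<lambda>q r s. xpos b m k c q r s t) (\<lambda>q r s. ypos d m k c q r s t) (\<lambda>q r s. zpos a m k c q r s t)
            q r s Px Py Pz"
  moreover have "jacobian3 (\<lambda>q r s. xpos b m k c q r s t) (\<lambda>q r s. ypos d m k c q r s t)
      (\<lambda>q r s. zpos a m k c q r s t) q r s \<noteq> 0"
    using gerstner_jacobian[OF assms(1)] assms(6) by simp
  ultimately have "Px = - rho0 * (deriv (\<lambda>t'. uvel b m k c q r s t') t + fh * wvel a m k c q r s t
                                   - f * vvel d m k c q r s t)"
    and "Py = - rho0 * (deriv (\<lambda>t'. vvel d m k c q r s t') t + f * uvel b m k c q r s t)"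
    and "Pz = - rho0 * (deriv (\<lambda>t'. wvel a m k c q r s t') t - fh * uvel b m k c q r s t + g)"
    using eulerian_gradient_unique grad by blast+
  then show "deriv (\<lambda>t'. uvel b m k c q r s t') t + fh * wvel a m k c q r s t - f * vvel d m k c q r s t
                = - (1 / rho0) * Px"
    and "deriv (\<lambda>t'. vvel d m k c q r s t') t + f * uvel b m k c q r s t = - (1 / rho0) * Py"
    and "deriv (\<lambda>t'. wvel a m k c q r s t') t - fh * uvel b m k c q r s t = - (1 / rho0) * Pz - g"
    using assms(5) by simp_all
qed

lemma pres_thermocline:
  assumes "rhop * g * a = rho0 * (k * c^2 * b + c * d * f - c * a * fh + a * g)"
  shows "\<exists>P0t. \<forall>q r t. pres P0t rho0 g f fh k c a b d m q r s0 t = P0 - rhop * g * zpos a m k c q r s0 t"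
proof (intro exI allI)
  fix q r t
  \<comment> \<open>The constant absorbs the terms of the pressure that do not oscillate; the pressure-continuity
      condition makes the oscillating ones agree.\<close>
  have "rhop * g * a * (exp (- m * s0) * cos (phase k c q t))
     = rho0 * (k * c^2 * b + c * d * f - c * a * fh + a * g) * (exp (- m * s0) * cos (phase k c q t))"
    using assms by simp
  then show "pres (P0 - rhop * g * s0 + rho0 * (- (1/2) * k^2 * c^2 * b^2 * exp (- 2 * m * s0)
                + (1/2) * fh * k * c * a * b * exp (- 2 * m * s0)
                - (1/2) * f * k * c * b * d * exp (- 2 * m * s0) + g * s0)) rho0 g f fh k c a b d m q r s0 t
      = P0 - rhop * g * zpos a m k c q r s0 t"
    unfolding pres_def zpos_def by (simp add: algebra_simps)
qed

lemma dispersion_relation: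
  fixes rho0 rhop g f fh k c a b d m :: real
  assumes "a \<noteq> 0" and "m \<noteq> 0" and "rho0 \<noteq> 0"
    and "m^2 = k^4 * c^2 / (k^2 * c^2 - f^2)"
    and "m * k * c^2 * b + m * c * d * f = k^2 * c^2 * a"
    and "rhop * g * a = rho0 * (k * c^2 * b + c * d * f - c * a * fh + a * g)"
  shows "c^2 * (c^2 * k^2 - f^2) = (c * fh + g * (rhop - rho0) / rho0)^2"
proof -
  have "k^2 * c^2 - f^2 \<noteq> 0" using assms(2,4) by auto
  then have m2: "m^2 * (k^2 * c^2 - f^2) = k^4 * c^2" using assms(4) by (simp add: field_simps)
  have "a * (c * fh + g * (rhop - rho0) / rho0) = k * c^2 * b + c * d * f"
    using assms(3,6) by (simp add: field_simps)
  also have "\<dots> = a * (k^2 * c^2 / m)" using assms(2,5) by (simp add: field_simps)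
  finally have "c * fh + g * (rhop - rho0) / rho0 = k^2 * c^2 / m"
    using assms(1) by (metis mult_left_cancel)
  moreover have "c^2 * (c^2 * k^2 - f^2) = (k^2 * c^2 / m)^2"
    using m2 assms(2) by (simp add: field_simps power2_eq_square power4_eq_xxxx)
  ultimately show ?thesis by simp
qed

theorem mainTheorem1:
  fixes g rho0 rhop f fh k a r0 c m b d sstar s0 sp :: real
  assumes hg: "g > 0" and hrho: "0 < rho0" "rho0 < rhop"
    and hk: "k > 0" and ha: "a > 0" and hr0: "r0 > 0"
    and hc: "c \<noteq> 0" and hkc: "k^2 * c^2 > f^2"
    and hm: "m > 0" "m^2 = k^4 * c^2 / (k^2 * c^2 - f^2)"
    and hb: "b = m * a / k" and hd: "d = - (f * m * a / (k^2 * c))"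
    and hs: "sstar > 0" "m^2 * a^2 * exp (- 2 * m * sstar) < 1" "sstar \<le> s0" "s0 < sp"
  shows
  \<comment> \<open>(i) Jacobian of the label-to-position map\<close>
  "(\<forall>q r s t. r \<in> {-r0..r0} \<longrightarrow> s \<in> {s0..sp} \<longrightarrow>
      det3 (deriv (\<lambda>q'. xpos b m k c q' r s t) q) (deriv (\<lambda>r'. xpos b m k c q r' s t) r)
             (deriv (\<lambda>s'. xpos b m k c q r s' t) s)
           (deriv (\<lambda>q'. ypos d m k c q' r s t) q) (deriv (\<lambda>r'. ypos d m k c q r' s t) r)
             (deriv (\<lambda>s'. ypos d m k c q r s' t) s)
           (deriv (\<lambda>q'. zpos a m k c q' r s t) q) (deriv (\<lambda>r'. zpos a m k c q r' s t) r)
             (deriv (\<lambda>s'. zpos a m k c q r s' t) s)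
        = 1 - m^2 * a^2 * exp (- 2 * m * s)
      \<and> 1 - m^2 * a^2 * exp (- 2 * m * s) \<noteq> 0)
   \<and>
  \<comment> \<open>(ii) velocities and the f-plane Euler equations; the Eulerian pressure gradient
      (Px,Py,Pz) is characterised by the chain rule \<open>\<nabla>_{(q,r,s)} P = J^T (Px,Py,Pz)\<close>\<close>
   (\<forall>q r s t. r \<in> {-r0..r0} \<longrightarrow> s \<in> {s0..sp} \<longrightarrow>
      deriv (\<lambda>t'. xpos b m k c q r s t') t = uvel b m k c q r s t
    \<and> deriv (\<lambda>t'. ypos d m k c q r s t') t = vvel d m k c q r s t
    \<and> deriv (\<lambda>t'. zpos a m k c q r s t') t = wvel a m k c q r s t
    \<and> (\<forall>P0t.
        (\<exists>Px Py Pz.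
           deriv (\<lambda>q'. pres P0t rho0 g f fh k c a b d m q' r s t) q
             = deriv (\<lambda>q'. xpos b m k c q' r s t) q * Px + deriv (\<lambda>q'. ypos d m k c q' r s t) q * Py
               + deriv (\<lambda>q'. zpos a m k c q' r s t) q * Pz
         \<and> deriv (\<lambda>r'. pres P0t rho0 g f fh k c a b d m q r' s t) r
             = deriv (\<lambda>r'. xpos b m k c q r' s t) r * Px + deriv (\<lambda>r'. ypos d m k c q r' s t) r * Py
               + deriv (\<lambda>r'. zpos a m k c q r' s t) r * Pz
         \<and> deriv (\<lambda>s'. pres P0t rho0 g f fh k c a b d m q r s' t) s
             = deriv (\<lambda>s'. xpos b m k c q r s' t) s * Px + deriv (\<lambda>s'. ypos d m k c q r s' t) s * Py
               + deriv (\<lambda>s'. zpos a m k c q r s' t) s * Pz)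
      \<and> (\<forall>Px Py Pz.
           deriv (\<lambda>q'. pres P0t rho0 g f fh k c a b d m q' r s t) q
             = deriv (\<lambda>q'. xpos b m k c q' r s t) q * Px + deriv (\<lambda>q'. ypos d m k c q' r s t) q * Py
               + deriv (\<lambda>q'. zpos a m k c q' r s t) q * Pz
         \<longrightarrow> deriv (\<lambda>r'. pres P0t rho0 g f fh k c a b d m q r' s t) r
             = deriv (\<lambda>r'. xpos b m k c q r' s t) r * Px + deriv (\<lambda>r'. ypos d m k c q r' s t) r * Py
               + deriv (\<lambda>r'. zpos a m k c q r' s t) r * Pz
         \<longrightarrow> deriv (\<lambda>s'. pres P0t rho0 g f fh k c a b d m q r s' t) s
             = deriv (\<lambda>s'. xpos b m k c q r s' t) s * Px + deriv (\<lambda>s'. ypos d m k c q r s' t) s * Py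
               + deriv (\<lambda>s'. zpos a m k c q r s' t) s * Pz
         \<longrightarrow> deriv (\<lambda>t'. uvel b m k c q r s t') t + fh * wvel a m k c q r s t - f * vvel d m k c q r s t
               = - (1 / rho0) * Px
           \<and> deriv (\<lambda>t'. vvel d m k c q r s t') t + f * uvel b m k c q r s t = - (1 / rho0) * Py
           \<and> deriv (\<lambda>t'. wvel a m k c q r s t') t - fh * uvel b m k c q r s t = - (1 / rho0) * Pz - g)))
   \<and>
  \<comment> \<open>(iii) thermocline s = s0 and dispersion relation\<close>
   (rhop * g * a = rho0 * (k * c^2 * b + c * d * f - c * a * fh + a * g) \<longrightarrow>
      (\<forall>P0. \<exists>P0t. \<forall>q r t. r \<in> {-r0..r0} \<longrightarrow>
          pres P0t rho0 g f fh k c a b d m q r s0 t = P0 - rhop * g * zpos a m k c q r s0 t)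
    \<and> c^2 * (c^2 * k^2 - f^2) = (c * fh + g * (rhop - rho0) / rho0)^2)"
proof -
  have "k \<noteq> 0" and "k^2 * c^2 \<noteq> f^2" and "rho0 \<noteq> 0" and "a \<noteq> 0" and "m \<noteq> 0"
    using hk hkc hrho(1) ha hm(1) by auto
  note params = gerstner_parameter_relations[OF \<open>k \<noteq> 0\<close> hc \<open>k^2 * c^2 \<noteq> f^2\<close> hm(2) hb hd]
  have jacobian_nz: "1 - m^2 * a^2 * exp (- 2 * m * s) \<noteq> 0" if "s \<in> {s0..sp}" for s
    using gerstner_jacobian_pos[of m sstar s a] hm(1) hs that by force
  note euler = gerstner_euler_equations[OF params \<open>rho0 \<noteq> 0\<close> jacobian_nz]
  show ?thesis
    apply (intro conjI)
    subgoal using gerstner_jacobian[OF params(1), unfolded jacobian3_def] jacobian_nz by blast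
    subgoal using euler[unfolded eulerian_gradient_def] by (simp add: deriv_xpos_t deriv_ypos_t deriv_zpos_t)
    subgoal using pres_thermocline[of rhop g a rho0 k c b d f fh m s0]
        dispersion_relation[OF \<open>a \<noteq> 0\<close> \<open>m \<noteq> 0\<close> \<open>rho0 \<noteq> 0\<close> hm(2) params(4)]
      by blast
    done
qed

end
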